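(* Let $n\ge2$ be an integer and $B(0,1)\subseteq\mathbb{R}^n$ the closed unit ball. If $A\subseteq B(0,1)$ is a Lusin set, then for every hyperplane $l$ tangent to $B(0,1)$, with $\pi:\mathbb{R}^n\to l$ the orthogonal projection, $\pi[A]$ is a Lusin set in $\pi[B(0,1)]$. The same holds with "Lusin set" replaced by "Sierpiński set".
   Context: A Lusin set in a Polish space $Y$ is an uncountable set $S\subseteq Y$ such that $S\cap M$ is countable for every meager $M\subseteq Y$. A Sierpiński set is an uncountable set $S$ such that $S\cap N$ is countable for every Lebesgue null set $N$. *)

theory Defs
  imports "HOL-Analysis.Analysis"
begin

definition nowhere_dense_in :: "'a topology \<Rightarrow> 'a set \<Rightarrow> bool" where
  "nowhere_dense_in T S \<longleftrightarrow> S \<subseteq> topspace T \<and> T interior_of (T closure_of S) = {}"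

definition meager_in :: "'a topology \<Rightarrow> 'a set \<Rightarrow> bool" where
  "meager_in T M \<longleftrightarrow> (\<exists>F. countable F \<and> (\<forall>S\<in>F. nowhere_dense_in T S) \<and> M = \<Union>F)"

definition lusin_in :: "'a topology \<Rightarrow> 'a set \<Rightarrow> bool" where
  "lusin_in T S \<longleftrightarrow> S \<subseteq> topspace T \<and> uncountable S \<and> (\<forall>M. meager_in T M \<longrightarrow> countable (S \<inter> M))"

definition sierpinski_in :: "'a measure \<Rightarrow> 'a set \<Rightarrow> 'a set \<Rightarrow> bool" where
  "sierpinski_in M Y S \<longleftrightarrow> S \<subseteq> Y \<and> uncountable S \<and> (\<forall>N\<in>null_sets M. countable (S \<inter> N))"

text \<open>Hyperplane tangent to the unit sphere at the unit vector u, and orthogonal projection onto it.\<close>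
definition tangent_hyperplane :: "'a::euclidean_space \<Rightarrow> 'a set" where
  "tangent_hyperplane u = {x. x \<bullet> u = 1}"

definition tproj :: "'a::euclidean_space \<Rightarrow> 'a \<Rightarrow> 'a" where
  "tproj u x = x - (x \<bullet> u - 1) *\<^sub>R u"

end

theory Submission imports Defs begin

text \<open>The fibres of the projection are lines, hence nowhere dense and Lebesgue null once the
dimension is at least 2; so if the image of A were countable, A would lie in a countable union of
small fibres. Conversely the preimage of a small subset of the hyperplane is small. For category
this holds because the projection maps nonempty relatively open subsets of the ball onto sets with
nonempty interior. For measure, the preimage of the isometric copy \<phi>[N] of a null set N is the
image of N \<times> \<real> under the Lipschitz map (y, t) \<mapsto> \<phi> y + t u; this map is a continuous injection,
so m + 1 \<le> n by invariance of dimension, and Lipschitz maps into a space of no smaller dimension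
preserve null sets.\<close>

lemma nowhere_dense_in_vimage:
  assumes cont: "continuous_map X Y f"
    and somewhat_open: "\<And>U. openin X U \<Longrightarrow> U \<noteq> {} \<Longrightarrow> Y interior_of (f ` U) \<noteq> {}"
    and S: "nowhere_dense_in Y S"
  shows "nowhere_dense_in X (topspace X \<inter> f -` S)"
proof -
  define U where "U = X interior_of (X closure_of (topspace X \<inter> f -` S))"
  have "f ` U \<subseteq> f ` (X closure_of (topspace X \<inter> f -` S))"
    unfolding U_def by (intro image_mono interior_of_subset)
  also have "\<dots> \<subseteq> Y closure_of (f ` (topspace X \<inter> f -` S))"
    by (rule continuous_map_image_closure_subset[OF cont])
  also have "\<dots> \<subseteq> Y closure_of S"
    by (intro closure_of_mono) blast
  finally have "Y interior_of (f ` U) \<subseteq> Y interior_of (Y closure_of S)"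
    by (rule interior_of_mono)
  then have "Y interior_of (f ` U) = {}"
    using S by (simp add: nowhere_dense_in_def)
  then have "U = {}"
    using somewhat_open[of U] by (auto simp: U_def)
  then show ?thesis
    by (simp add: nowhere_dense_in_def U_def)
qed

lemma meager_in_vimage:
  assumes "\<And>S. nowhere_dense_in Y S \<Longrightarrow> nowhere_dense_in X (topspace X \<inter> f -` S)"
    and "meager_in Y M"
  shows "meager_in X (topspace X \<inter> f -` M)"
proof -
  obtain F where F: "countable F" "\<And>S. S \<in> F \<Longrightarrow> nowhere_dense_in Y S" "M = \<Union>F"
    using assms(2) by (auto simp: meager_in_def)
  show ?thesis
    unfolding meager_in_def
    by (rule exI[of _ "(\<lambda>S. topspace X \<inter> f -` S) ` F"]) (use F assms(1) in auto)
qed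

lemma lusin_in_image:
  assumes into: "f ` topspace X \<subseteq> topspace Y"
    and meager_vimage: "\<And>M. meager_in Y M \<Longrightarrow> meager_in X (topspace X \<inter> f -` M)"
    and fibres: "\<And>y. nowhere_dense_in X (topspace X \<inter> f -` {y})"
    and A: "lusin_in X A"
  shows "lusin_in Y (f ` A)"
proof -
  have AX: "A \<subseteq> topspace X" and unc: "uncountable A"
    and L: "\<And>M. meager_in X M \<Longrightarrow> countable (A \<inter> M)"
    using A by (auto simp: lusin_in_def)
  have "countable (f ` A \<inter> M)" if "meager_in Y M" for M
  proof -
    have "countable (f ` (A \<inter> (topspace X \<inter> f -` M)))"
      using L[OF meager_vimage[OF that]] by blast
    then show ?thesis
      by (rule countable_subset[rotated]) (use AX in auto)
  qed
  moreover have "uncountable (f ` A)"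
  proof
    assume "countable (f ` A)"
    then have "meager_in X (\<Union>y\<in>f ` A. topspace X \<inter> f -` {y})"
      unfolding meager_in_def
      by (intro exI[of _ "(\<lambda>y. topspace X \<inter> f -` {y}) ` f ` A"]) (use fibres in auto)
    then have "countable (A \<inter> (\<Union>y\<in>f ` A. topspace X \<inter> f -` {y}))"
      by (rule L)
    moreover have "A \<inter> (\<Union>y\<in>f ` A. topspace X \<inter> f -` {y}) = A"
      using AX by blast
    ultimately show False
      using unc by simp
  qed
  ultimately show ?thesis
    using AX into by (auto simp: lusin_in_def)
qed

lemma sierpinski_in_image:
  assumes null_vimage: "\<And>N. N \<in> null_sets M \<Longrightarrow> f -` N \<in> null_sets M'"
    and fibres: "\<And>y. f -` {y} \<in> null_sets M'"
    and A: "sierpinski_in M' Y A"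
  shows "sierpinski_in M (f ` Y) (f ` A)"
proof -
  have AY: "A \<subseteq> Y" and unc: "uncountable A"
    and S: "\<And>N. N \<in> null_sets M' \<Longrightarrow> countable (A \<inter> N)"
    using A by (auto simp: sierpinski_in_def)
  have "countable (f ` A \<inter> N)" if "N \<in> null_sets M" for N
  proof -
    have "countable (f ` (A \<inter> f -` N))"
      using S[OF null_vimage[OF that]] by blast
    then show ?thesis
      by (rule countable_subset[rotated]) auto
  qed
  moreover have "uncountable (f ` A)"
  proof
    assume "countable (f ` A)"
    then have "countable (A \<inter> (\<Union>y\<in>f ` A. f -` {y}))"
      using fibres by (intro S null_sets_UN') auto
    moreover have "A \<inter> (\<Union>y\<in>f ` A. f -` {y}) = A"
      by blast
    ultimately show False
      using unc by simp
  qed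
  ultimately show ?thesis
    using AY by (auto simp: sierpinski_in_def)
qed

lemma openin_regular_closed_obtain_ball:
  fixes S :: "'a::metric_space set"
  assumes "S \<subseteq> closure (interior S)" "openin (top_of_set S) U" "U \<noteq> {}"
  obtains x r where "0 < r" "ball x r \<subseteq> U"
proof -
  obtain V where V: "open V" "U = S \<inter> V"
    using assms(2) by (auto simp: openin_open)
  then have "V \<inter> closure (interior S) \<noteq> {}"
    using assms(1,3) by blast
  then obtain x where "x \<in> V \<inter> interior S"
    using open_Int_closure_eq_empty[OF V(1)] by blast
  moreover have "open (V \<inter> interior S)"
    using V(1) by blast
  ultimately obtain r where "0 < r" "ball x r \<subseteq> V \<inter> interior S"
    using open_contains_ball by blast
  then show ?thesis
    using that V(2) interior_subset by blast
qed

lemma nowhere_dense_in_negligible: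
  fixes S :: "'a::euclidean_space set"
  assumes S: "S \<subseteq> closure (interior S)"
    and C: "closedin (top_of_set S) C" "negligible C"
  shows "nowhere_dense_in (top_of_set S) C"
proof -
  have "U = {}" if U: "openin (top_of_set S) U" "U \<subseteq> C" for U
  proof (rule ccontr)
    assume "U \<noteq> {}"
    then obtain x r where "0 < r" "ball x r \<subseteq> U"
      using openin_regular_closed_obtain_ball[OF S U(1)] by blast
    then show False
      using open_not_negligible[of "ball x r"] negligible_subset[OF C(2)] U(2) by auto
  qed
  then show ?thesis
    using C(1) closedin_subset[OF C(1)]
    by (simp add: nowhere_dense_in_def closure_of_closedin interior_of_eq_empty)
qed

lemma tproj_in_tangent_hyperplane: "norm u = 1 \<Longrightarrow> tproj u x \<in> tangent_hyperplane u"
  by (simp add: tproj_def tangent_hyperplane_def inner_diff_left norm_eq_1)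

lemma tproj_eq_self: "z \<in> tangent_hyperplane u \<Longrightarrow> tproj u z = z"
  by (simp add: tproj_def tangent_hyperplane_def)

lemma tproj_add_scaleR: "norm u = 1 \<Longrightarrow> tproj u (x + c *\<^sub>R u) = tproj u x"
  by (simp add: tproj_def inner_add_left norm_eq_1 algebra_simps)

lemma tproj_decomposition: "x = tproj u x + (x \<bullet> u - 1) *\<^sub>R u"
  by (simp add: tproj_def)

lemma continuous_on_tproj: "continuous_on S (tproj u)"
  unfolding tproj_def by (intro continuous_intros)

lemma tproj_image_ball:
  assumes "norm u = 1"
  shows "tangent_hyperplane u \<inter> ball (tproj u x) r \<subseteq> tproj u ` ball x r"
proof
  fix z assume z: "z \<in> tangent_hyperplane u \<inter> ball (tproj u x) r"
  define w where "w = z + (x \<bullet> u - 1) *\<^sub>R u"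
  have "tproj u w = z"
    using z assms by (simp add: w_def tproj_add_scaleR tproj_eq_self)
  moreover have "dist x w = dist (tproj u x) z"
    by (simp add: w_def tproj_def dist_norm algebra_simps)
  ultimately show "z \<in> tproj u ` ball x r"
    using z by (metis IntD2 image_eqI mem_ball)
qed

lemma negligible_line:
  fixes u :: "'a::euclidean_space"
  assumes "DIM('a) \<ge> 2"
  shows "negligible (range (\<lambda>t::real. p + t *\<^sub>R u))"
  by (rule negligible_differentiable_image_lowdim) (use assms in \<open>auto intro!: derivative_intros\<close>)

lemma negligible_tproj_fibre:
  fixes u :: "'a::euclidean_space"
  assumes "DIM('a) \<ge> 2"
  shows "negligible {x. tproj u x = p}"
proof (rule negligible_subset[OF negligible_line[OF assms, of p u]])
  show "{x. tproj u x = p} \<subseteq> range (\<lambda>t. p + t *\<^sub>R u)"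
    by clarsimp (metis tproj_decomposition rangeI)
qed

lemma interior_of_tproj_image_neq_empty:
  fixes S :: "'a::euclidean_space set"
  assumes u: "norm u = 1" and S: "S \<subseteq> closure (interior S)"
    and U: "openin (top_of_set S) U" "U \<noteq> {}"
  shows "top_of_set (tproj u ` S) interior_of (tproj u ` U) \<noteq> {}"
proof -
  obtain x r where xr: "0 < r" "ball x r \<subseteq> U"
    using openin_regular_closed_obtain_ball[OF S U] by blast
  have "x \<in> S"
    using xr openin_imp_subset[OF U(1)] by (meson centre_in_ball subsetD)
  define W where "W = tproj u ` S \<inter> ball (tproj u x) r"
  have "W \<subseteq> tangent_hyperplane u \<inter> ball (tproj u x) r"
    using tproj_in_tangent_hyperplane[OF u] by (auto simp: W_def)
  also have "\<dots> \<subseteq> tproj u ` ball x r"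
    by (rule tproj_image_ball[OF u])
  also have "\<dots> \<subseteq> tproj u ` U"
    using xr(2) by (rule image_mono)
  finally have "W \<subseteq> top_of_set (tproj u ` S) interior_of (tproj u ` U)"
    by (rule interior_of_maximal) (unfold W_def, intro openin_open_Int open_ball)
  moreover have "tproj u x \<in> W"
    using \<open>x \<in> S\<close> xr(1) by (simp add: W_def)
  ultimately show ?thesis
    by blast
qed

lemma nowhere_dense_in_tproj_fibre:
  fixes S :: "'a::euclidean_space set"
  assumes "DIM('a) \<ge> 2" and "S \<subseteq> closure (interior S)"
  shows "nowhere_dense_in (top_of_set S) (topspace (top_of_set S) \<inter> tproj u -` {p})"
proof -
  have fibre_eq: "topspace (top_of_set S) \<inter> tproj u -` {p} = S \<inter> {x. tproj u x = p}"
    by auto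
  have "closed {x. tproj u x = p}"
    by (intro closed_Collect_eq continuous_on_tproj continuous_on_const)
  then show ?thesis
    unfolding fibre_eq
    by (intro nowhere_dense_in_negligible[OF assms(2)] closedin_closed_Int
        negligible_subset[OF negligible_tproj_fibre[OF assms(1), of u p]]) auto
qed

lemma lusin_in_tproj_image:
  fixes S :: "'a::euclidean_space set"
  assumes dim: "DIM('a) \<ge> 2" and u: "norm u = 1" and S: "S \<subseteq> closure (interior S)"
    and A: "lusin_in (top_of_set S) A"
  shows "lusin_in (top_of_set (tproj u ` S)) (tproj u ` A)"
proof -
  have cont: "continuous_map (top_of_set S) (top_of_set (tproj u ` S)) (tproj u)"
    unfolding continuous_map_subtopology_eu by (simp add: continuous_on_tproj)
  note nowhere_dense_vimage =
    nowhere_dense_in_vimage[OF cont interior_of_tproj_image_neq_empty[OF u S]]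
  show ?thesis
    by (rule lusin_in_image[OF _ meager_in_vimage[OF nowhere_dense_vimage]
          nowhere_dense_in_tproj_fibre[OF dim S] A]) simp
qed

lemma negligible_Times_UNIV:
  fixes N :: "'a::euclidean_space set"
  assumes "negligible N"
  shows "negligible (N \<times> (UNIV :: 'b::euclidean_space set))"
proof -
  obtain N' where N': "N' \<in> null_sets lborel" "N \<subseteq> N'"
    using assms by (auto simp: negligible_iff_null_sets null_sets_completion_iff2)
  have "N' \<times> UNIV \<in> null_sets (lborel \<Otimes>\<^sub>M (lborel :: 'b measure))"
    by (rule lborel.times_in_null_sets1[OF N'(1)]) simp
  then have "N' \<times> UNIV \<in> null_sets (lborel :: ('a \<times> 'b) measure)"
    by (simp add: lborel_prod)
  moreover have "N \<times> UNIV \<subseteq> N' \<times> (UNIV :: 'b set)"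
    using N'(2) by auto
  ultimately show ?thesis
    unfolding negligible_iff_null_sets
    by (metis null_sets_completion_subset null_sets_completionI)
qed

lemma negligible_tproj_vimage_isometric_image:
  fixes \<phi> :: "'b::euclidean_space \<Rightarrow> 'a::euclidean_space"
  assumes u: "norm u = 1" and iso: "\<forall>x y. dist (\<phi> x) (\<phi> y) = dist x y"
    and rng: "range \<phi> = tangent_hyperplane u" and N: "negligible N"
  shows "negligible (tproj u -` \<phi> ` N)"
proof -
  define G where "G z = \<phi> (fst z) + snd z *\<^sub>R u" for z :: "'b \<times> real"
  have G_lipschitz: "dist (G z) (G w) \<le> 2 * dist z w" for z w
  proof -
    have "G z - G w = (\<phi> (fst z) - \<phi> (fst w)) + (snd z - snd w) *\<^sub>R u"
      by (simp add: G_def algebra_simps)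
    then have "dist (G z) (G w) \<le> dist (\<phi> (fst z)) (\<phi> (fst w)) + \<bar>snd z - snd w\<bar>"
      using norm_triangle_ineq[of "\<phi> (fst z) - \<phi> (fst w)" "(snd z - snd w) *\<^sub>R u"] u
      by (simp add: dist_norm)
    also have "\<dots> = dist (fst z) (fst w) + dist (snd z) (snd w)"
      using iso by (simp add: dist_real_def)
    also have "\<dots> \<le> 2 * dist z w"
      using dist_fst_le[of z w] dist_snd_le[of z w] by linarith
    finally show ?thesis .
  qed
  have "inj G"
  proof (rule injI)
    fix z w assume Gzw: "G z = G w"
    have "G z \<bullet> u = 1 + snd z" for z
      using rng u by (auto simp: G_def tangent_hyperplane_def inner_add_left norm_eq_1)
    then have "snd z = snd w"
      using Gzw by (metis add_left_cancel)
    then have "\<phi> (fst z) = \<phi> (fst w)"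
      using Gzw by (simp add: G_def)
    then have "fst z = fst w"
      by (metis dist_eq_0_iff iso)
    with \<open>snd z = snd w\<close> show "z = w"
      by (simp add: prod_eq_iff)
  qed
  moreover have "continuous_on UNIV G"
    by (rule lipschitz_on_continuous_on[OF lipschitz_onI[of UNIV G 2]]) (use G_lipschitz in auto)
  ultimately have dim: "DIM('b \<times> real) \<le> DIM('a)"
    by (intro invariance_of_dimension[of UNIV G]) (auto intro: inj_on_subset)
  have "negligible (G ` (N \<times> UNIV))"
  proof (rule negligible_locally_Lipschitz_image[OF dim negligible_Times_UNIV[OF N]])
    fix z
    show "\<exists>T B. open T \<and> z \<in> T \<and> (\<forall>w \<in> N \<times> UNIV \<inter> T. norm (G w - G z) \<le> B * norm (w - z))"
      by (intro exI[of _ UNIV] exI[of _ 2]) (simp add: G_lipschitz[unfolded dist_norm])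
  qed
  moreover have "tproj u -` \<phi> ` N \<subseteq> G ` (N \<times> UNIV)"
  proof
    fix x assume "x \<in> tproj u -` \<phi> ` N"
    then obtain y where "y \<in> N" "tproj u x = \<phi> y"
      by auto
    then have "x = G (y, x \<bullet> u - 1)"
      using tproj_decomposition[of x u] by (simp add: G_def)
    with \<open>y \<in> N\<close> show "x \<in> G ` (N \<times> UNIV)"
      by blast
  qed
  ultimately show ?thesis
    using negligible_subset by blast
qed

lemma sierpinski_in_tproj_image:
  fixes \<phi> :: "'b::euclidean_space \<Rightarrow> 'a::euclidean_space"
  assumes u: "norm u = 1" and iso: "\<forall>x y. dist (\<phi> x) (\<phi> y) = dist x y"
    and rng: "range \<phi> = tangent_hyperplane u" and A: "sierpinski_in lebesgue Y A"
  shows "sierpinski_in lebesgue (\<phi> -` tproj u ` Y) (\<phi> -` tproj u ` A)"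
proof -
  define f where "f x = inv \<phi> (tproj u x)" for x
  have "inj \<phi>"
    using iso by (metis dist_eq_0_iff injI)
  have \<phi>_f: "\<phi> (f x) = tproj u x" for x
    using rng tproj_in_tangent_hyperplane[OF u] by (simp add: f_def f_inv_into_f)
  have image_f: "f ` B = \<phi> -` tproj u ` B" for B
  proof
    show "f ` B \<subseteq> \<phi> -` tproj u ` B"
      using \<phi>_f by auto
    show "\<phi> -` tproj u ` B \<subseteq> f ` B"
      using \<open>inj \<phi>\<close> by (auto simp: f_def) (metis inv_f_f imageI)
  qed
  have null_vimage: "f -` N \<in> null_sets lebesgue" if "N \<in> null_sets lebesgue" for N
  proof -
    have "f -` N \<subseteq> tproj u -` \<phi> ` N"
      using \<phi>_f by (auto simp: vimage_def) (metis imageI)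
    then show ?thesis
      using negligible_tproj_vimage_isometric_image[OF u iso rng] that
      by (metis negligible_iff_null_sets negligible_subset)
  qed
  show ?thesis
    using sierpinski_in_image[OF null_vimage null_vimage A] by (simp add: image_f)
qed

theorem mainTheorem9:
  fixes dummy :: "real ^ 'n" and dummy' :: "real ^ 'm"
  assumes "CARD('n) \<ge> 2"
  shows
   "(\<forall>A :: (real ^ 'n) set. lusin_in (top_of_set (cball 0 1)) A \<longrightarrow>
       (\<forall>u :: real ^ 'n. norm u = 1 \<longrightarrow>
          lusin_in (top_of_set (tproj u ` cball 0 1)) (tproj u ` A)))
    \<and>
    (\<forall>A :: (real ^ 'n) set. sierpinski_in lebesgue (cball 0 1) A \<longrightarrow>
       (\<forall>u :: real ^ 'n. norm u = 1 \<longrightarrow>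
          (\<forall>\<phi> :: real ^ 'm \<Rightarrow> real ^ 'n.
             (\<forall>x y. dist (\<phi> x) (\<phi> y) = dist x y) \<and> range \<phi> = tangent_hyperplane u \<longrightarrow>
             sierpinski_in lebesgue (\<phi> -` (tproj u ` cball 0 1)) (\<phi> -` (tproj u ` A)))))"
proof -
  have dim: "DIM(real ^ 'n) \<ge> 2"
    using assms by simp
  have "cball (0 :: real ^ 'n) 1 \<subseteq> closure (interior (cball 0 1))"
    by simp
  then show ?thesis
    using lusin_in_tproj_image[OF dim] sierpinski_in_tproj_image by blast
qed

end
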